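(* Let $p,p'\in(0,1/2)$ be constants with $p'<p$. For every two-sided $p$-error PACA $C$ with constant time complexity $T=O(1)$ there is a two-sided $p'$-error PACA $C'$ with time complexity $O(T)=O(1)$ such that $L(C)=L(C')$.
   Context: PACA: a bounded one-dimensional CA with state set $Q$, input alphabet $\Sigma\subseteq Q$, accepting states $A\subseteq Q$, boundary symbol $\$$ and two local transition functions $\delta_0,\delta_1$; at each step every cell independently tosses a fair coin $c$ and updates by $\delta_c$ applied to its left neighbor, itself and its right neighbor ($\$$ beyond borders). On input $x\in\Sigma^n$, a computation is accepting if at some step all cells are simultaneously in $A$. $C$ has time complexity $T$ if every accepting computation on inputs of length $n$ first reaches $A^n$ at a step $<T(n)$. For $p<1/2$, $C$ is a two-sided $p$-error PACA for $L$ if for every input $x$: $x\in L\iff\Pr[C\text{ accepts }x]\ge1-p$ and $x\notin L\iff\Pr[C\text{ accepts }x]\le p$; then $L(C)=L$. *)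

theory Defs
  imports Main "HOL-Library.Landau_Symbols"
begin

text \<open>States are drawn from the natural numbers; a PACA specifies its finite state set Q.
  The boundary symbol is represented by None (neighbour values have type nat option).\<close>

record paca =
  Q     :: "nat set"
  Sigma :: "nat set"
  Acc   :: "nat set"
  delta0 :: "nat option \<Rightarrow> nat \<Rightarrow> nat option \<Rightarrow> nat"
  delta1 :: "nat option \<Rightarrow> nat \<Rightarrow> nat option \<Rightarrow> nat"

definition is_paca :: "paca \<Rightarrow> bool" where
  "is_paca C \<longleftrightarrow> finite (Q C) \<and> Sigma C \<subseteq> Q C \<and> Acc C \<subseteq> Q C \<and>
     (\<forall>l c r. c \<in> Q C \<longrightarrow> l \<in> insert None (Some ` Q C) \<longrightarrow> r \<in> insert None (Some ` Q C) \<longrightarrow>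
        delta0 C l c r \<in> Q C \<and> delta1 C l c r \<in> Q C)"

text \<open>One synchronous step; b ! i is the coin of cell i (False = 0, True = 1).\<close>
definition step :: "paca \<Rightarrow> nat list \<Rightarrow> bool list \<Rightarrow> nat list" where
  "step C c b = map (\<lambda>i. (if b ! i then delta1 C else delta0 C)
        (if i = 0 then None else Some (c ! (i - 1)))
        (c ! i)
        (if i + 1 < length c then Some (c ! (i + 1)) else None)) [0..<length c]"

fun conf :: "paca \<Rightarrow> nat list \<Rightarrow> bool list list \<Rightarrow> nat list" where
  "conf C c [] = c"
| "conf C c (b # bs) = conf C (step C c b) bs"

definition all_acc :: "paca \<Rightarrow> nat list \<Rightarrow> bool" where
  "all_acc C c \<longleftrightarrow> set c \<subseteq> Acc C"

definition coin_seqs :: "nat \<Rightarrow> nat \<Rightarrow> bool list list set" where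
  "coin_seqs n t = {cs. length cs = t \<and> (\<forall>b\<in>set cs. length b = n)}"

definition prob_within :: "paca \<Rightarrow> nat list \<Rightarrow> nat \<Rightarrow> real" where
  "prob_within C x t =
     real (card {cs \<in> coin_seqs (length x) t. \<exists>k\<le>t. all_acc C (conf C x (take k cs))})
       / 2 ^ (length x * t)"

text \<open>Probability of acceptance = probability that some step has all cells accepting
  (limit of the increasing finite-horizon probabilities).\<close>
definition prob_accept :: "paca \<Rightarrow> nat list \<Rightarrow> real" where
  "prob_accept C x = (SUP t. prob_within C x t)"

definition has_time :: "paca \<Rightarrow> (nat \<Rightarrow> nat) \<Rightarrow> bool" where
  "has_time C T \<longleftrightarrow> (\<forall>x cs. set x \<subseteq> Sigma C \<longrightarrow> cs \<in> coin_seqs (length x) (length cs) \<longrightarrow>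
       all_acc C (conf C x cs) \<longrightarrow> (\<forall>k<length cs. \<not> all_acc C (conf C x (take k cs))) \<longrightarrow>
       length cs < T (length x))"

definition two_sided :: "paca \<Rightarrow> real \<Rightarrow> nat list set \<Rightarrow> bool" where
  "two_sided C p L \<longleftrightarrow> L \<subseteq> lists (Sigma C) \<and>
     (\<forall>x \<in> lists (Sigma C). (x \<in> L \<longleftrightarrow> prob_accept C x \<ge> 1 - p) \<and>
                            (x \<notin> L \<longleftrightarrow> prob_accept C x \<le> p))"

end

theory Submission
  imports Defs "HOL-Library.Nat_Bijection"
begin

text \<open>Run \<open>C\<close> independently \<open>2h + 1\<close> times in succession, each run being granted
  \<open>E \<ge> max T\<close> steps, and accept iff a majority of the runs accepts.  If each run errs with
  probability at most \<open>p < 1/2\<close>, the majority errs with probability at most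
  \<open>2^(2h+1) (p(1-p))^h\<close>, which is below \<open>p'\<close> for large \<open>h\<close>.

  Within constant time the cells cannot count the accepting runs by communicating.  Instead every
  cell records, for each step of each run, whether it was accepting; afterwards all cells
  synchronously enumerate the finitely many ways of selecting one step (or none) in every run.
  At the \<open>k\<close>-th selection the configuration accepts iff at least \<open>h + 1\<close> runs are selected and
  every cell was accepting at every selected step, so the automaton accepts at some point exactly
  when a majority of the runs accepted.  All of this takes a constant number of steps.\<close>

section \<open>Coin sequences\<close>

lemma card_filter_compl: "finite A \<Longrightarrow> card {x \<in> A. P x} + card {x \<in> A. \<not> P x} = card A"
proof -
  assume "finite A"
  then have "card ({x \<in> A. P x} \<union> {x \<in> A. \<not> P x}) = card {x \<in> A. P x} + card {x \<in> A. \<not> P x}"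
    by (intro card_Un_disjoint) auto
  moreover have "{x \<in> A. P x} \<union> {x \<in> A. \<not> P x} = A" by blast
  ultimately show ?thesis by simp
qed

lemma coin_seqs_eq_lists: "coin_seqs n t = {cs. set cs \<subseteq> {b. length b = n} \<and> length cs = t}"
  by (auto simp: coin_seqs_def)

lemma finite_bool_lists_length: "finite {b :: bool list. length b = n}"
  using finite_lists_length_eq[of "UNIV :: bool set" n] by simp

lemma finite_coin_seqs: "finite (coin_seqs n t)"
  unfolding coin_seqs_eq_lists by (intro finite_lists_length_eq finite_bool_lists_length)

lemma card_coin_seqs: "card (coin_seqs n t) = 2 ^ (n * t)"
proof -
  have "card {b :: bool list. length b = n} = 2 ^ n"
    using card_lists_length_eq[of "UNIV :: bool set" n] by simp
  then show ?thesis
    unfolding coin_seqs_eq_lists card_lists_length_eq[OF finite_bool_lists_length]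
    by (simp add: power_mult)
qed

lemma card_coin_seqs_append:
  "card {cs \<in> coin_seqs n (t + d). R (take t cs) (drop t cs)} =
     (\<Sum>a\<in>coin_seqs n t. card {c \<in> coin_seqs n d. R a c})"
proof -
  have "{cs \<in> coin_seqs n (t + d). R (take t cs) (drop t cs)} =
      (\<Union>a\<in>coin_seqs n t. (\<lambda>c. a @ c) ` {c \<in> coin_seqs n d. R a c})"
  proof (intro set_eqI iffI)
    fix cs assume cs: "cs \<in> {cs \<in> coin_seqs n (t + d). R (take t cs) (drop t cs)}"
    then have "take t cs \<in> coin_seqs n t" "drop t cs \<in> {c \<in> coin_seqs n d. R (take t cs) c}"
      by (auto simp: coin_seqs_def dest: in_set_takeD in_set_dropD)
    then show "cs \<in> (\<Union>a\<in>coin_seqs n t. (\<lambda>c. a @ c) ` {c \<in> coin_seqs n d. R a c})"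
      by (intro UN_I image_eqI[of cs _ "drop t cs"]) auto
  qed (auto simp: coin_seqs_def)
  also have "card \<dots> = (\<Sum>a\<in>coin_seqs n t. card ((\<lambda>c. a @ c) ` {c \<in> coin_seqs n d. R a c}))"
  proof (rule card_UN_disjoint)
    show "finite (coin_seqs n t)" by (rule finite_coin_seqs)
    show "\<forall>a\<in>coin_seqs n t. finite ((\<lambda>c. a @ c) ` {c \<in> coin_seqs n d. R a c})"
      by (simp add: finite_coin_seqs)
  qed (auto simp: coin_seqs_def)
  also have "\<dots> = (\<Sum>a\<in>coin_seqs n t. card {c \<in> coin_seqs n d. R a c})"
    by (intro sum.cong refl card_image) (auto simp: inj_on_def)
  finally show ?thesis .
qed

lemma card_coin_seqs_take:
  "card {cs \<in> coin_seqs n (t + d). P (take t cs)} = card {a \<in> coin_seqs n t. P a} * 2 ^ (n * d)"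
proof -
  have "card {cs \<in> coin_seqs n (t + d). P (take t cs)} =
      (\<Sum>a\<in>coin_seqs n t. if P a then card (coin_seqs n d) else 0)"
    unfolding card_coin_seqs_append[of n t d "\<lambda>a c. P a"] by (intro sum.cong) simp_all
  also have "\<dots> = card {a \<in> coin_seqs n t. P a} * 2 ^ (n * d)"
    by (simp add: sum.inter_filter[symmetric] finite_coin_seqs card_coin_seqs)
  finally show ?thesis .
qed

definition prob_coins :: "nat \<Rightarrow> nat \<Rightarrow> (bool list list \<Rightarrow> bool) \<Rightarrow> real" where
  "prob_coins n t P = real (card {cs \<in> coin_seqs n t. P cs}) / 2 ^ (n * t)"

lemma prob_coins_cong:
  "(\<And>cs. cs \<in> coin_seqs n t \<Longrightarrow> P cs \<longleftrightarrow> P' cs) \<Longrightarrow> prob_coins n t P = prob_coins n t P'"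
  unfolding prob_coins_def by (metis (mono_tags, lifting) mem_Collect_eq)

lemma prob_coins_mono:
  "(\<And>cs. cs \<in> coin_seqs n t \<Longrightarrow> P cs \<Longrightarrow> P' cs) \<Longrightarrow> prob_coins n t P \<le> prob_coins n t P'"
  unfolding prob_coins_def
  by (intro divide_right_mono of_nat_mono card_mono) (auto simp: finite_coin_seqs)

lemma prob_coins_True: "prob_coins n t (\<lambda>_. True) = 1"
  by (simp add: prob_coins_def card_coin_seqs)

lemma prob_coins_not: "prob_coins n t (\<lambda>cs. \<not> P cs) = 1 - prob_coins n t P"
proof -
  have "card {cs \<in> coin_seqs n t. P cs} + card {cs \<in> coin_seqs n t. \<not> P cs} = 2 ^ (n * t)"
    unfolding card_filter_compl[OF finite_coin_seqs] card_coin_seqs ..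
  then have "real (card {cs \<in> coin_seqs n t. P cs} + card {cs \<in> coin_seqs n t. \<not> P cs}) = 2 ^ (n * t)"
    by (simp only: of_nat_numeral of_nat_power)
  then show ?thesis unfolding prob_coins_def by (simp add: field_simps)
qed

lemma prob_coins_take: "prob_coins n (t + d) (\<lambda>cs. P (take t cs)) = prob_coins n t P"
  by (simp add: prob_coins_def card_coin_seqs_take add_mult_distrib2 power_add)


section \<open>Majority of independent blocks\<close>

definition block :: "nat \<Rightarrow> 'a list \<Rightarrow> nat \<Rightarrow> 'a list" where
  "block E cs j = take E (drop (j * E) cs)"

definition count_blocks :: "('a list \<Rightarrow> bool) \<Rightarrow> nat \<Rightarrow> nat \<Rightarrow> 'a list \<Rightarrow> nat" where
  "count_blocks P E m cs = card {j. j < m \<and> P (block E cs j)}"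

lemma count_blocks_le: "count_blocks P E m cs \<le> m"
  unfolding count_blocks_def by (metis (no_types, lifting) card_lessThan card_mono finite_lessThan
      lessThan_iff mem_Collect_eq subsetI)

lemma count_blocks_not: "count_blocks P E m cs + count_blocks (\<lambda>b. \<not> P b) E m cs = m"
  using card_filter_compl[of "{..<m}" "\<lambda>j. P (block E cs j)"]
  by (simp add: count_blocks_def lessThan_def)

lemma count_blocks_Suc:
  assumes "length b = E"
  shows "count_blocks P E (Suc m) (b @ c) = (if P b then 1 else 0) + count_blocks P E m c"
proof -
  have "block E (b @ c) 0 = b" "block E (b @ c) (Suc j) = block E c j" for j
    using assms by (simp_all add: block_def)
  then have "{j. j < Suc m \<and> P (block E (b @ c) j)} =
      (if P b then {0} else {}) \<union> Suc ` {j. j < m \<and> P (block E c j)}"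
    by (auto simp: less_Suc_eq_0_disj)
  moreover have "card ((if P b then {0} else {}) \<union> Suc ` {j. j < m \<and> P (block E c j)}) =
      card (if P b then {0 :: nat} else {}) + card (Suc ` {j. j < m \<and> P (block E c j)})"
    by (rule card_Un_disjoint) auto
  ultimately show ?thesis unfolding count_blocks_def by (simp add: card_image)
qed

lemma binomial_weight_Suc:
  fixes G B :: nat
  shows "G * (if k = 0 then 0 else (m choose (k - 1)) * G ^ (k - 1) * B ^ (m - (k - 1))) +
      B * ((m choose k) * G ^ k * B ^ (m - k)) = (Suc m choose k) * G ^ k * B ^ (Suc m - k)"
proof (cases k)
  case (Suc k')
  show ?thesis
  proof (cases "k' < m")
    case True
    then have "m - k' = Suc (m - k)" "Suc m - k = Suc (m - k)" using Suc by auto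
    moreover have "G * ((m choose k') * G ^ k' * B ^ Suc (m - k)) + B * ((m choose k) * G ^ k * B ^ (m - k))
      = ((m choose k') + (m choose k)) * (G * G ^ k') * B ^ Suc (m - k)"
      unfolding Suc by (simp add: algebra_simps)
    ultimately show ?thesis using Suc by simp
  next
    case False
    then show ?thesis using Suc by (cases "k' = m") (auto simp: binomial_eq_0)
  qed
qed simp

lemma card_count_blocks_eq:
  fixes P :: "bool list list \<Rightarrow> bool" and n E :: nat
  defines "G \<equiv> card {b \<in> coin_seqs n E. P b}" and "B \<equiv> card {b \<in> coin_seqs n E. \<not> P b}"
  shows "card {cs \<in> coin_seqs n (m * E). count_blocks P E m cs = k} = (m choose k) * G ^ k * B ^ (m - k)"
proof (induction m arbitrary: k)
  case 0
  have "coin_seqs n 0 = {[]}" by (auto simp: coin_seqs_def)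
  then show ?case by (cases k) (auto simp: count_blocks_def)
next
  case (Suc m)
  let ?N = "\<lambda>k. card {cs \<in> coin_seqs n (m * E). count_blocks P E m cs = k}"
  let ?R = "\<lambda>a c. (if P a then 1 else 0) + count_blocks P E m c = k"
  have "{cs \<in> coin_seqs n (Suc m * E). count_blocks P E (Suc m) cs = k} =
      {cs \<in> coin_seqs n (E + m * E). ?R (take E cs) (drop E cs)}"
  proof -
    have "count_blocks P E (Suc m) cs = (if P (take E cs) then 1 else 0) + count_blocks P E m (drop E cs)"
      if "cs \<in> coin_seqs n (E + m * E)" for cs
      using count_blocks_Suc[of "take E cs" E P m "drop E cs"] that by (simp add: coin_seqs_def)
    then show ?thesis by auto
  qed
  then have "card {cs \<in> coin_seqs n (Suc m * E). count_blocks P E (Suc m) cs = k} =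
      (\<Sum>a\<in>coin_seqs n E. card {c \<in> coin_seqs n (m * E). ?R a c})"
    using card_coin_seqs_append[of n E "m * E" ?R] by simp
  also have "\<dots> = (\<Sum>a\<in>coin_seqs n E. if P a then (if k = 0 then 0 else ?N (k - 1)) else ?N k)"
    by (intro sum.cong refl) (auto intro!: arg_cong[where f = card])
  also have "\<dots> = G * (if k = 0 then 0 else ?N (k - 1)) + B * ?N k"
    by (simp add: sum.If_cases finite_coin_seqs G_def B_def Int_def)
  also have "\<dots> = (Suc m choose k) * G ^ k * B ^ (Suc m - k)"
    by (simp only: Suc.IH binomial_weight_Suc)
  finally show ?case .
qed

lemma majority_term_le:
  fixes q :: real
  assumes "0 \<le> q" "q \<le> 1 - q" "h < k" "k \<le> 2 * h + 1"
  shows "q ^ k * (1 - q) ^ (2 * h + 1 - k) \<le> (q * (1 - q)) ^ h"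
proof -
  obtain a where a: "k = h + 1 + a" using assms(3) less_iff_Suc_add by auto
  have ah: "a \<le> h" and e: "2 * h + 1 - k = h - a" using a assms(4) by simp_all
  have "q ^ k * (1 - q) ^ (2 * h + 1 - k) = q * (q ^ h * (q ^ a * (1 - q) ^ (h - a)))"
    unfolding e a by (simp add: power_add)
  also have "\<dots> \<le> 1 * (q ^ h * ((1 - q) ^ a * (1 - q) ^ (h - a)))"
    using assms by (intro mult_mono power_mono) auto
  also have "\<dots> = (q * (1 - q)) ^ h"
    using ah by (simp add: power_add[symmetric] power_mult_distrib)
  finally show ?thesis .
qed

lemma mult_one_minus_mono:
  fixes q p :: real
  assumes "0 \<le> q" "q \<le> p" "p \<le> 1/2"
  shows "q * (1 - q) \<le> p * (1 - p)"
proof -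
  have "0 \<le> (p - q) * (1 - p - q)" using assms by (intro mult_nonneg_nonneg) auto
  then show ?thesis by (simp add: algebra_simps)
qed

lemma binomial_upper_tail_le:
  fixes q p :: real
  assumes "0 \<le> q" "q \<le> p" "p \<le> 1/2"
  shows "(\<Sum>k\<in>{h<..2*h+1}. real ((2*h+1) choose k) * (q ^ k * (1 - q) ^ (2*h+1-k)))
    \<le> 2 ^ (2*h+1) * (p * (1 - p)) ^ h"
proof -
  have "(\<Sum>k\<in>{h<..2*h+1}. real ((2*h+1) choose k) * (q ^ k * (1 - q) ^ (2*h+1-k)))
      \<le> (\<Sum>k\<in>{h<..2*h+1}. real ((2*h+1) choose k) * (p * (1 - p)) ^ h)"
  proof (intro sum_mono mult_left_mono)
    fix k assume "k \<in> {h<..2*h+1}"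
    then have "q ^ k * (1 - q) ^ (2 * h + 1 - k) \<le> (q * (1 - q)) ^ h"
      using assms by (intro majority_term_le) auto
    also have "\<dots> \<le> (p * (1 - p)) ^ h"
      using assms mult_one_minus_mono[OF assms] by (intro power_mono) auto
    finally show "q ^ k * (1 - q) ^ (2 * h + 1 - k) \<le> (p * (1 - p)) ^ h" .
  qed simp
  also have "\<dots> \<le> (\<Sum>k\<le>2*h+1. real ((2*h+1) choose k)) * (p * (1 - p)) ^ h"
    unfolding sum_distrib_right[symmetric]
    using assms by (intro mult_right_mono sum_mono2) auto
  also have "\<dots> = 2 ^ (2*h+1) * (p * (1 - p)) ^ h"
    unfolding of_nat_sum[symmetric] choose_row_sum by simp
  finally show ?thesis .
qed

lemma prob_count_blocks_eq:
  fixes P :: "bool list list \<Rightarrow> bool" and n E :: nat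
  shows "prob_coins n (m * E) (\<lambda>cs. count_blocks P E m cs = k) =
    real (m choose k) * prob_coins n E P ^ k * (1 - prob_coins n E P) ^ (m - k)"
proof (cases "k \<le> m")
  case True
  define Z :: real where "Z = 2 ^ (n * E)"
  have G: "real (card {b \<in> coin_seqs n E. P b}) = prob_coins n E P * Z"
    and B: "real (card {b \<in> coin_seqs n E. \<not> P b}) = (1 - prob_coins n E P) * Z"
    using prob_coins_not[of n E P] unfolding prob_coins_def Z_def
    by (simp_all add: field_simps flip: distrib_left)
  have "(2 :: real) ^ (n * (m * E)) = Z ^ m"
    unfolding Z_def by (simp add: mult_ac flip: power_mult)
  also have "\<dots> = Z ^ k * Z ^ (m - k)"
    using True by (simp flip: power_add)
  finally have "prob_coins n (m * E) (\<lambda>cs. count_blocks P E m cs = k) = real (m choose k) *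
      real (card {b \<in> coin_seqs n E. P b}) ^ k * real (card {b \<in> coin_seqs n E. \<not> P b}) ^ (m - k) /
      (Z ^ k * Z ^ (m - k))"
    unfolding prob_coins_def[of n "m * E"] card_count_blocks_eq by simp
  moreover have "Z > 0" by (simp add: Z_def)
  ultimately show ?thesis by (simp add: G B power_mult_distrib)
qed (simp add: prob_coins_def card_count_blocks_eq binomial_eq_0)

lemma prob_count_blocks_greater:
  "prob_coins n (m * E) (\<lambda>cs. h < count_blocks P E m cs) =
    (\<Sum>k\<in>{h<..m}. prob_coins n (m * E) (\<lambda>cs. count_blocks P E m cs = k))"
proof -
  let ?S = "coin_seqs n (m * E)"
  have "{cs \<in> ?S. h < count_blocks P E m cs} = (\<Union>k\<in>{h<..m}. {cs \<in> ?S. count_blocks P E m cs = k})"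
    using count_blocks_le[of P E m] by fastforce
  then have "card {cs \<in> ?S. h < count_blocks P E m cs} = (\<Sum>k\<in>{h<..m}. card {cs \<in> ?S. count_blocks P E m cs = k})"
    by (simp only:) (rule card_UN_disjoint, auto simp: finite_coin_seqs)
  then show ?thesis unfolding prob_coins_def by (simp add: sum_divide_distrib)
qed

lemma prob_majority_blocks_le:
  fixes P :: "bool list list \<Rightarrow> bool" and n E h :: nat and p :: real
  assumes "prob_coins n E P \<le> p" "p \<le> 1/2"
  shows "prob_coins n ((2*h+1) * E) (\<lambda>cs. h < count_blocks P E (2*h+1) cs) \<le> 2 ^ (2*h+1) * (p * (1 - p)) ^ h"
proof -
  let ?q = "prob_coins n E P"
  have "prob_coins n ((2*h+1) * E) (\<lambda>cs. h < count_blocks P E (2*h+1) cs) =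
      (\<Sum>k\<in>{h<..2*h+1}. real ((2*h+1) choose k) * (?q ^ k * (1 - ?q) ^ (2*h+1-k)))"
    unfolding prob_count_blocks_greater prob_count_blocks_eq by (simp only: mult.assoc)
  also have "\<dots> \<le> 2 ^ (2*h+1) * (p * (1 - p)) ^ h"
    using assms by (intro binomial_upper_tail_le) (simp_all add: prob_coins_def)
  finally show ?thesis .
qed

lemma prob_majority_blocks_not:
  "prob_coins n ((2*h+1) * E) (\<lambda>cs. h < count_blocks P E (2*h+1) cs) =
     1 - prob_coins n ((2*h+1) * E) (\<lambda>cs. h < count_blocks (\<lambda>b. \<not> P b) E (2*h+1) cs)"
proof -
  have "h < count_blocks P E (2*h+1) cs \<longleftrightarrow> \<not> h < count_blocks (\<lambda>b. \<not> P b) E (2*h+1) cs" for cs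
    using count_blocks_not[of P E "2*h+1" cs] by linarith
  then show ?thesis by (simp add: prob_coins_not[symmetric])
qed

lemma majority_error_vanishes:
  fixes p p' :: real
  assumes "0 \<le> p" "p < 1/2" "0 < p'"
  obtains h where "2 ^ (2*h+1) * (p * (1 - p)) ^ h \<le> p'"
proof -
  define y where "y = 4 * p * (1 - p)"
  have "0 < (1 - 2 * p) ^ 2" using assms by simp
  then have "y < 1" by (simp add: y_def power2_eq_square algebra_simps)
  then obtain h where h: "y ^ h < p' / 2"
    using real_arch_pow_inv[of "p' / 2" y] assms(3) by auto
  have "(2::real) ^ (2*h+1) = 2 * 4 ^ h" by (induction h) auto
  moreover have "(4::real) ^ h * (p * (1 - p)) ^ h = y ^ h"
    unfolding y_def power_mult_distrib[symmetric] by (simp add: mult.assoc)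
  ultimately have "(2::real) ^ (2*h+1) * (p * (1 - p)) ^ h = 2 * y ^ h" by simp
  then show ?thesis using h by (intro that[of h]) simp
qed

lemma block_index_less: "j < m \<Longrightarrow> r < E \<Longrightarrow> j * E + r < m * (E :: nat)"
proof -
  assume "j < m" "r < E"
  then have "j * E + r < Suc j * E" by simp
  also have "\<dots> \<le> m * E" using \<open>j < m\<close> by (intro mult_le_mono1) simp
  finally show ?thesis .
qed

section \<open>Acceptance probabilities\<close>

lemma length_step [simp]: "length (step C c b) = length c"
  by (simp add: step_def)

lemma length_conf [simp]: "length (conf C c cs) = length c"
  by (induction cs arbitrary: c) auto

lemma conf_snoc: "conf C c (cs @ [b]) = step C (conf C c cs) b"
  by (induction cs arbitrary: c) auto

lemma step_nth:
  "i < length c \<Longrightarrow> step C c b ! i = (if b ! i then delta1 C else delta0 C)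
     (if i = 0 then None else Some (c ! (i - 1))) (c ! i)
     (if i + 1 < length c then Some (c ! (i + 1)) else None)"
  by (simp add: step_def)

lemma step_in_Q:
  assumes "is_paca C" "set c \<subseteq> Q C" shows "set (step C c b) \<subseteq> Q C"
proof -
  have "step C c b ! i \<in> Q C" if i: "i < length c" for i
  proof -
    have "c ! i \<in> Q C" using assms(2) i by auto
    moreover have "(if i = 0 then None else Some (c ! (i - 1))) \<in> insert None (Some ` Q C)"
      "(if i + 1 < length c then Some (c ! (i + 1)) else None) \<in> insert None (Some ` Q C)"
      using assms(2) i by (auto simp: subset_iff)
    ultimately show ?thesis
      unfolding step_nth[OF i] using assms(1) unfolding is_paca_def by (auto simp del: insert_iff)
  qed
  then show ?thesis by (auto simp: in_set_conv_nth)
qed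

lemma conf_in_Q: "is_paca C \<Longrightarrow> set c \<subseteq> Q C \<Longrightarrow> set (conf C c cs) \<subseteq> Q C"
  by (induction cs arbitrary: c) (auto simp: step_in_Q)

lemma all_acc_iff_nth: "all_acc C c \<longleftrightarrow> (\<forall>i<length c. c ! i \<in> Acc C)"
  unfolding all_acc_def by (metis in_set_conv_nth subset_code(1))


definition accepts_before :: "paca \<Rightarrow> nat list \<Rightarrow> nat \<Rightarrow> bool list list \<Rightarrow> bool" where
  "accepts_before C x t cs \<longleftrightarrow> (\<exists>k<t. all_acc C (conf C x (take k cs)))"

lemma prob_within_eq: "prob_within C x t = prob_coins (length x) t (accepts_before C x (Suc t))"
  by (simp add: prob_within_def prob_coins_def accepts_before_def less_Suc_eq_le)

lemma accepts_before_take: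
  "t \<le> Suc s \<Longrightarrow> accepts_before C x t (take s cs) \<longleftrightarrow> accepts_before C x t cs"
  unfolding accepts_before_def by (metis less_Suc_eq_le order_less_le_trans take_take min.absorb1)

lemma accepts_before_mono: "accepts_before C x t cs \<Longrightarrow> t \<le> t' \<Longrightarrow> accepts_before C x t' cs"
  unfolding accepts_before_def by (meson order_less_le_trans)

lemma prob_within_eq_add: "prob_within C x t = prob_coins (length x) (t + d) (accepts_before C x (Suc t))"
  using prob_coins_take[of "length x" t d "accepts_before C x (Suc t)"]
  by (simp add: prob_within_eq accepts_before_take)

lemma prob_within_mono:
  assumes "t \<le> t'" shows "prob_within C x t \<le> prob_within C x t'"
proof -
  obtain d where t': "t' = t + d" using assms le_Suc_ex by blast
  have "prob_within C x t = prob_coins (length x) (t + d) (accepts_before C x (Suc t))"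
    by (rule prob_within_eq_add)
  also have "\<dots> \<le> prob_within C x t'"
    unfolding t' prob_within_eq by (rule prob_coins_mono) (simp add: accepts_before_mono)
  finally show ?thesis .
qed

lemma prob_accept_eq_prob_within:
  assumes acc: "\<And>cs. cs \<in> coin_seqs (length x) (length cs) \<Longrightarrow> all_acc C (conf C x cs) \<Longrightarrow>
                 accepts_before C x (Suc t0) cs"
  shows "prob_accept C x = prob_within C x t0"
proof -
  have stable: "prob_within C x (t0 + d) = prob_within C x t0" for d
    unfolding prob_within_eq_add[of C x t0 d] prob_within_eq[of C x "t0 + d"]
  proof (rule prob_coins_cong, rule iffI)
    fix cs assume cs: "cs \<in> coin_seqs (length x) (t0 + d)"
    assume "accepts_before C x (Suc (t0 + d)) cs"
    then obtain k where k: "all_acc C (conf C x (take k cs))" unfolding accepts_before_def by blast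
    have "take k cs \<in> coin_seqs (length x) (length (take k cs))"
      using cs by (auto simp: coin_seqs_def dest: in_set_takeD)
    from acc[OF this k] show "accepts_before C x (Suc t0) cs"
      unfolding accepts_before_def by (metis min.strict_coboundedI1 take_take)
  qed (auto elim: accepts_before_mono)
  show ?thesis
    unfolding prob_accept_def
  proof (rule cSup_eq_maximum)
    fix y assume "y \<in> range (prob_within C x)"
    then obtain t where y: "y = prob_within C x t" by blast
    show "y \<le> prob_within C x t0"
    proof (cases "t \<le> t0")
      case False
      then obtain d where "t = t0 + d" using le_Suc_ex nat_le_linear by blast
      then show ?thesis using y stable by simp
    qed (simp add: y prob_within_mono)
  qed simp
qed

lemma has_time_accepts_before:
  assumes "has_time C T" "set x \<subseteq> Sigma C" "cs \<in> coin_seqs (length x) (length cs)"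
    and "all_acc C (conf C x cs)"
  shows "accepts_before C x (T (length x)) cs"
proof -
  define k where "k = (LEAST k. all_acc C (conf C x (take k cs)))"
  have acc: "all_acc C (conf C x (take (length cs) cs))" using assms(4) by simp
  have k: "all_acc C (conf C x (take k cs))" "k \<le> length cs"
    unfolding k_def using acc by (rule LeastI, rule Least_le)
  have "\<forall>j<length (take k cs). \<not> all_acc C (conf C x (take j (take k cs)))"
    using not_less_Least[of _ "\<lambda>k. all_acc C (conf C x (take k cs))"] by (simp add: k_def)
  moreover have "take k cs \<in> coin_seqs (length x) (length (take k cs))"
    using assms(3) by (auto simp: coin_seqs_def dest: in_set_takeD)
  ultimately have "length (take k cs) < T (length x)"
    using assms(1,2) k(1) unfolding has_time_def by blast
  then show ?thesis using k unfolding accepts_before_def by auto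
qed

lemma has_time_Nil_pos: "has_time C T \<Longrightarrow> 0 < T 0"
  unfolding has_time_def
  by (erule allE[of _ "[]"], erule allE[of _ "[]"]) (simp add: coin_seqs_def all_acc_def)

lemma prob_accept_Nil: "prob_accept C [] = 1"
proof -
  have "accepts_before C [] (Suc t) cs" for t cs
    unfolding accepts_before_def all_acc_def by (intro exI[of _ 0]) simp
  then have "prob_within C [] t = 1" for t
    using prob_coins_cong[of 0 t "accepts_before C [] (Suc t)" "\<lambda>_. True"]
    by (simp add: prob_within_eq prob_coins_True)
  then show ?thesis by (simp add: prob_accept_def)
qed

lemma prob_accept_eq_block:
  assumes "has_time C T" "set x \<subseteq> Sigma C" "T (length x) \<le> E" "0 < E"
  shows "prob_accept C x = prob_coins (length x) E (accepts_before C x E)"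
proof -
  obtain t where E: "E = Suc t" using assms(4) gr0_implies_Suc by blast
  have "prob_accept C x = prob_within C x t"
  proof (rule prob_accept_eq_prob_within)
    fix cs assume "cs \<in> coin_seqs (length x) (length cs)" "all_acc C (conf C x cs)"
    then have "accepts_before C x (T (length x)) cs" by (rule has_time_accepts_before[OF assms(1,2)])
    then show "accepts_before C x (Suc t) cs" using assms(3) unfolding E by (rule accepts_before_mono)
  qed
  also have "\<dots> = prob_coins (length x) E (accepts_before C x E)"
    unfolding E prob_within_eq_add[where d = 1] by simp
  finally show ?thesis .
qed

lemma two_sidedI:
  assumes "L \<subseteq> lists (Sigma C)" "p < 1/2"
    and "\<And>x. x \<in> L \<Longrightarrow> 1 - p \<le> prob_accept C x"
    and "\<And>x. x \<in> lists (Sigma C) \<Longrightarrow> x \<notin> L \<Longrightarrow> prob_accept C x \<le> p"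
  shows "two_sided C p L"
  using assms unfolding two_sided_def by force

lemma bounded_of_bigo_one:
  fixes T :: "nat \<Rightarrow> nat"
  assumes "(\<lambda>n. real (T n)) \<in> O(\<lambda>n. 1)"
  shows "\<exists>D. \<forall>n. T n \<le> D"
proof -
  obtain c where "eventually (\<lambda>n. norm (real (T n)) \<le> c * norm (1::real)) at_top"
    using assms by (rule landau_o.bigE)
  then obtain N where N: "\<And>n. n \<ge> N \<Longrightarrow> real (T n) \<le> c" by (auto simp: eventually_at_top_linorder)
  have "T n \<le> max (nat \<lceil>c\<rceil>) (Max (T ` {..<N}))" for n
  proof (cases "n < N")
    case True
    then have "T n \<le> Max (T ` {..<N})" by (intro Max_ge) auto
    then show ?thesis by simp
  next
    case False
    then show ?thesis using N[of n] by linarith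
  qed
  then show ?thesis by blast
qed

lemma bigo_of_nonzero_const:
  "(\<lambda>n. real (if T n = 0 then 0 else c)) \<in> O(\<lambda>n. real (T n))"
proof (rule landau_o.bigI[of "real c + 1"], simp, rule always_eventually, rule allI)
  fix n
  show "norm (real (if T n = 0 then 0 else c)) \<le> (real c + 1) * norm (real (T n))"
  proof (cases "T n = 0")
    case False
    then have "real c + 1 \<le> (real c + 1) * real (T n)"
      using mult_left_mono[of 1 "real (T n)" "real c + 1"] by simp
    then have "real c \<le> (real c + 1) * real (T n)" by linarith
    then show ?thesis using False by simp
  qed simp
qed

section \<open>The amplifying automaton\<close>

type_synonym cell_record = "nat \<times> nat \<times> nat \<times> bool list"

text \<open>A cell stores a record \<open>(a, c, s, R)\<close>: its input letter \<open>a\<close>, a clock \<open>c\<close>, the state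
  \<open>s\<close> of \<open>C\<close> in the current run, and the list \<open>R\<close> telling for each earlier clock value whether
  the state was accepting.  Run \<open>j < m\<close> occupies the clock values \<open>j E ..< (j + 1) E\<close>; at
  clock \<open>m E + k\<close> the cell checks the \<open>k\<close>-th selection.\<close>
locale amplifier =
  fixes C :: paca and E m thr :: nat
  assumes paca: "is_paca C"
begin

definition selections :: "nat list list" where
  "selections = List.n_lists m [0..<Suc E]"

definition horizon :: nat where
  "horizon = m * E + length selections"

definition max_state :: nat where
  "max_state = Max (insert 0 (Q C))"

text \<open>Records are coded above all states of \<open>C\<close>; a state \<open>a\<close> of \<open>C\<close> itself decodes to the
  initial record of the input letter \<open>a\<close>.\<close>
definition encode :: "cell_record \<Rightarrow> nat" where
  "encode t = (case t of (a, c, s, R) \<Rightarrow> Suc max_state + list_encode (a # c # s # map of_bool R))"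

definition decode :: "nat \<Rightarrow> cell_record" where
  "decode v = (if v \<le> max_state then (v, 0, v, []) else
     (let l = list_decode (v - Suc max_state) in (l ! 0, l ! 1, l ! 2, map (\<lambda>z. z \<noteq> 0) (drop 3 l))))"

definition sim_state :: "cell_record \<Rightarrow> nat" where
  "sim_state t = fst (snd (snd t))"

definition update :: "bool \<Rightarrow> cell_record option \<Rightarrow> cell_record \<Rightarrow> cell_record option \<Rightarrow> cell_record" where
  "update b l t r = (case t of (a, c, s, R) \<Rightarrow>
     if c < m * E then (a, Suc c, if Suc c mod E = 0 then a
          else (if b then delta1 C else delta0 C) (map_option sim_state l) s (map_option sim_state r),
        R @ [s \<in> Acc C])
     else (a, min (Suc c) horizon, s, R))"

definition delta' :: "bool \<Rightarrow> nat option \<Rightarrow> nat \<Rightarrow> nat option \<Rightarrow> nat" where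
  "delta' b l v r = encode (update b (map_option decode l) (decode v) (map_option decode r))"

definition record_accepts :: "cell_record \<Rightarrow> bool" where
  "record_accepts t = (case t of (a, c, s, R) \<Rightarrow> m * E \<le> c \<and> c - m * E < length selections \<and>
      thr \<le> card {j. j < m \<and> selections ! (c - m * E) ! j < E} \<and>
      (\<forall>j<m. selections ! (c - m * E) ! j < E \<longrightarrow> R ! (j * E + selections ! (c - m * E) ! j)))"

definition records :: "cell_record set" where
  "records = {(a, c, s, R). a \<in> Sigma C \<and> c \<le> horizon \<and> s \<in> Q C \<and> length R \<le> c}"

definition Q' :: "nat set" where
  "Q' = Sigma C \<union> encode ` records"

definition Acc' :: "nat set" where
  "Acc' = {v \<in> Q'. record_accepts (decode v)}"

definition C' :: paca where
  "C' = \<lparr>Q = Q', Sigma = Sigma C, Acc = Acc', delta0 = delta' False, delta1 = delta' True\<rparr>"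

lemma Q_C' [simp]: "Q C' = Q'"
  and Acc_C' [simp]: "Acc C' = Acc'"
  and Sigma_C' [simp]: "Sigma C' = Sigma C"
  by (simp_all add: C'_def)

lemma finite_Q: "finite (Q C)"
  using paca by (simp add: is_paca_def)

lemma Sigma_subset_Q: "Sigma C \<subseteq> Q C"
  using paca by (simp add: is_paca_def)

lemma decode_encode [simp]: "decode (encode t) = t"
proof -
  obtain a c s R where t: "t = (a, c, s, R)" by (cases t) auto
  have "map (\<lambda>z. z \<noteq> 0) (map of_bool R :: nat list) = R" by (induction R) auto
  then show ?thesis unfolding t encode_def decode_def by (simp add: Let_def)
qed

lemma decode_state: "a \<in> Q C \<Longrightarrow> decode a = (a, 0, a, [])"
  using finite_Q by (simp add: decode_def max_state_def)

lemma finite_records: "finite records"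
proof -
  have "records \<subseteq> Sigma C \<times> {..horizon} \<times> Q C \<times> {R. set R \<subseteq> (UNIV :: bool set) \<and> length R \<le> horizon}"
    unfolding records_def by auto
  moreover have "finite (Sigma C \<times> {..horizon} \<times> Q C \<times> {R. set R \<subseteq> (UNIV :: bool set) \<and> length R \<le> horizon})"
    using finite_Q finite_subset[OF Sigma_subset_Q finite_Q] finite_lists_length_le[of "UNIV :: bool set"]
    by (intro finite_cartesian_product) auto
  ultimately show ?thesis by (rule finite_subset)
qed

lemma decode_Q': "v \<in> Q' \<Longrightarrow> decode v \<in> records"
  unfolding Q'_def using Sigma_subset_Q by (auto simp: decode_state records_def)

lemma mE_le_horizon: "m * E \<le> horizon"
  by (simp add: horizon_def)

lemma update_records:
  assumes "t \<in> records" "l \<in> insert None (Some ` records)" "r \<in> insert None (Some ` records)"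
  shows "update b l t r \<in> records"
proof -
  obtain a c s R where t: "t = (a, c, s, R)" by (cases t) auto
  have a: "a \<in> Sigma C" "c \<le> horizon" "s \<in> Q C" "length R \<le> c" using assms(1) t by (auto simp: records_def)
  have "map_option sim_state l \<in> insert None (Some ` Q C)" "map_option sim_state r \<in> insert None (Some ` Q C)"
    using assms(2,3) by (auto simp: sim_state_def records_def)
  then have "(if b then delta1 C else delta0 C) (map_option sim_state l) s (map_option sim_state r) \<in> Q C"
    using paca a(3) unfolding is_paca_def by (auto simp del: insert_iff)
  then show ?thesis unfolding t update_def using a Sigma_subset_Q mE_le_horizon by (auto simp: records_def)
qed

lemma is_paca_C': "is_paca C'"
proof -
  have "map_option decode v \<in> insert None (Some ` records)" if "v \<in> insert None (Some ` Q')" for v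
    using that decode_Q' by auto
  then have "update b (map_option decode l) (decode v) (map_option decode r) \<in> records"
    if "v \<in> Q'" "l \<in> insert None (Some ` Q')" "r \<in> insert None (Some ` Q')" for b l v r
    using that by (intro update_records decode_Q')
  then have "delta' b l v r \<in> Q'"
    if "v \<in> Q'" "l \<in> insert None (Some ` Q')" "r \<in> insert None (Some ` Q')" for b l v r
    using that unfolding delta'_def Q'_def by blast
  moreover have "finite Q'"
    unfolding Q'_def using finite_records finite_subset[OF Sigma_subset_Q finite_Q] by simp
  ultimately show ?thesis
    unfolding is_paca_def by (auto simp: Q'_def Acc'_def C'_def)
qed

text \<open>The coin vectors consumed so far by the run in progress at time \<open>u\<close>; none once all
  runs are over.\<close>
definition run_coins :: "bool list list \<Rightarrow> nat \<Rightarrow> bool list list" where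
  "run_coins cs u = take (min u (m * E) mod E) (drop (min u (m * E) div E * E) cs)"

definition predicted :: "nat list \<Rightarrow> bool list list \<Rightarrow> cell_record list" where
  "predicted x cs = map (\<lambda>i. (x ! i, min (length cs) horizon, conf C x (run_coins cs (length cs)) ! i,
      map (\<lambda>u. conf C x (run_coins cs u) ! i \<in> Acc C) [0..<min (length cs) (m * E)])) [0..<length x]"

definition step_records :: "cell_record list \<Rightarrow> bool list \<Rightarrow> cell_record list" where
  "step_records rs b = map (\<lambda>i. update (b ! i) (if i = 0 then None else Some (rs ! (i - 1))) (rs ! i)
      (if i + 1 < length rs then Some (rs ! (i + 1)) else None)) [0..<length rs]"

lemma decode_step_C': "map decode (step C' c b) = step_records (map decode c) b"
proof (rule nth_equalityI)
  have "(if b then delta1 C' else delta0 C') = delta' b" for b by (cases b) (simp_all add: C'_def)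
  then show "map decode (step C' c b) ! i = step_records (map decode c) b ! i"
    if "i < length (map decode (step C' c b))" for i
    using that by (simp add: step_nth delta'_def step_records_def)
qed (simp add: step_records_def)

lemma run_coins_snoc:
  assumes "u \<le> length cs" shows "run_coins (cs @ [b]) u = run_coins cs u"
proof -
  define w where "w = min u (m * E)"
  have "w mod E \<le> length cs - w div E * E"
    using assms div_mult_mod_eq[of w E] unfolding w_def by linarith
  then show ?thesis unfolding run_coins_def w_def[symmetric] by simp
qed

lemma run_coins_eq_Nil: "min u (m * E) mod E = 0 \<Longrightarrow> run_coins cs u = []"
  by (simp add: run_coins_def)

lemma run_coins_Suc:
  assumes "length cs = t" "Suc t \<le> m * E" "Suc t mod E \<noteq> 0"
  shows "run_coins (cs @ [b]) (Suc t) = run_coins cs t @ [b]"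
proof -
  have m1: "Suc t mod E = Suc (t mod E)" and d1: "Suc t div E = t div E"
    using assms(3) by (metis mod_Suc, simp add: div_Suc)
  have "length (drop (t div E * E) cs) = t mod E"
    using assms(1) by (simp add: minus_div_mult_eq_mod)
  then show ?thesis
    unfolding run_coins_def using assms m1 d1 div_times_less_eq_dividend[of t E] by simp
qed

lemma conf_run_coins_Suc:
  assumes "length cs = t" "t < m * E"
  shows "conf C x (run_coins (cs @ [b]) (Suc t)) =
    (if Suc t mod E = 0 then x else step C (conf C x (run_coins cs t)) b)"
  using assms by (simp add: run_coins_eq_Nil run_coins_Suc conf_snoc)

lemma run_coins_block:
  assumes "j < m" "r < E" shows "run_coins cs (j * E + r) = take r (drop (j * E) cs)"
proof -
  have "min (j * E + r) (m * E) = j * E + r" using block_index_less[OF assms] by simp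
  then show ?thesis unfolding run_coins_def using assms by simp
qed

lemma length_predicted [simp]: "length (predicted x cs) = length x"
  by (simp add: predicted_def)

lemma predicted_nth:
  "i < length x \<Longrightarrow> predicted x cs ! i = (x ! i, min (length cs) horizon, conf C x (run_coins cs (length cs)) ! i,
      map (\<lambda>u. conf C x (run_coins cs u) ! i \<in> Acc C) [0..<min (length cs) (m * E)])"
  by (simp add: predicted_def)

lemma step_records_predicted: "step_records (predicted x cs) b = predicted x (cs @ [b])"
proof (rule nth_equalityI)
  fix i assume "i < length (step_records (predicted x cs) b)"
  then have i: "i < length x" by (simp add: step_records_def)
  define t where "t = length cs"
  define cf where "cf = conf C x (run_coins cs t)"
  define hist where "hist k = map (\<lambda>u. conf C x (run_coins cs u) ! i \<in> Acc C) [0..<k]" for k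
  have hist_snoc: "map (\<lambda>u. conf C x (run_coins (cs @ [b]) u) ! i \<in> Acc C) [0..<k] = hist k"
    if "k \<le> Suc t" for k
    unfolding hist_def using that by (intro map_cong refl) (simp add: run_coins_snoc t_def)
  have old: "predicted x cs ! i = (x ! i, min t horizon, cf ! i, hist (min t (m * E)))"
    using predicted_nth[OF i] by (simp add: t_def cf_def hist_def)
  have new: "predicted x (cs @ [b]) ! i = (x ! i, min (Suc t) horizon,
      conf C x (run_coins (cs @ [b]) (Suc t)) ! i, hist (min (Suc t) (m * E)))"
    using predicted_nth[OF i, of "cs @ [b]"] hist_snoc by (simp add: t_def)
  have left: "map_option sim_state (if i = 0 then None else Some (predicted x cs ! (i - 1))) =
      (if i = 0 then None else Some (cf ! (i - 1)))"
    using i predicted_nth[of "i - 1" x cs] by (simp add: sim_state_def t_def cf_def)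
  have right: "map_option sim_state (if i + 1 < length x then Some (predicted x cs ! (i + 1)) else None) =
      (if i + 1 < length cf then Some (cf ! (i + 1)) else None)"
    using predicted_nth[of "i + 1" x cs] by (simp add: sim_state_def t_def cf_def)
  have "step_records (predicted x cs) b ! i = update (b ! i)
      (if i = 0 then None else Some (predicted x cs ! (i - 1))) (predicted x cs ! i)
      (if i + 1 < length x then Some (predicted x cs ! (i + 1)) else None)"
    using i by (simp add: step_records_def)
  also have "\<dots> = predicted x (cs @ [b]) ! i"
  proof (cases "t < m * E")
    case True
    have "hist (Suc t) = hist t @ [cf ! i \<in> Acc C]" by (simp add: hist_def cf_def)
    moreover have "conf C x (run_coins (cs @ [b]) (Suc t)) = (if Suc t mod E = 0 then x else step C cf b)"
      using True by (simp add: conf_run_coins_Suc t_def cf_def)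
    ultimately show ?thesis
      unfolding old new update_def using True mE_le_horizon i left right
      by (auto simp: step_nth cf_def)
  next
    case False
    then have "run_coins (cs @ [b]) (Suc t) = []" "run_coins cs t = []"
      by (auto intro: run_coins_eq_Nil)
    then show ?thesis
      unfolding old new update_def using False mE_le_horizon by (auto simp: cf_def min_def)
  qed
  finally show "step_records (predicted x cs) b ! i = predicted x (cs @ [b]) ! i" .
qed (simp add: step_records_def)

lemma decode_conf_C':
  assumes "set x \<subseteq> Sigma C"
  shows "map decode (conf C' x cs) = predicted x cs"
proof (induction cs rule: rev_induct)
  case Nil
  have "x ! i \<in> Q C" if "i < length x" for i
    using assms Sigma_subset_Q that by (meson nth_mem subsetD)
  then show ?case
    by (intro nth_equalityI) (simp_all add: predicted_nth decode_state run_coins_def)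
next
  case (snoc b cs)
  then show ?case by (simp add: conf_snoc decode_step_C' step_records_predicted)
qed

definition selection_accepts :: "nat list \<Rightarrow> bool list list \<Rightarrow> nat list \<Rightarrow> bool" where
  "selection_accepts x cs sel \<longleftrightarrow> thr \<le> card {j. j < m \<and> sel ! j < E} \<and>
     (\<forall>j<m. sel ! j < E \<longrightarrow> all_acc C (conf C x (take (sel ! j) (drop (j * E) cs))))"

lemma record_accepts_predicted:
  assumes "i < length x"
  shows "record_accepts (predicted x cs ! i) \<longleftrightarrow> m * E \<le> length cs \<and> length cs < horizon \<and>
    (let sel = selections ! (length cs - m * E) in thr \<le> card {j. j < m \<and> sel ! j < E} \<and>
      (\<forall>j<m. sel ! j < E \<longrightarrow> conf C x (take (sel ! j) (drop (j * E) cs)) ! i \<in> Acc C))"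
proof (cases "m * E \<le> length cs \<and> length cs < horizon")
  case True
  define sel where "sel = selections ! (length cs - m * E)"
  have "map (\<lambda>u. conf C x (run_coins cs u) ! i \<in> Acc C) [0..<m * E] ! (j * E + sel ! j) =
      (conf C x (take (sel ! j) (drop (j * E) cs)) ! i \<in> Acc C)" if "j < m" "sel ! j < E" for j
    using that run_coins_block[OF that] block_index_less[OF that] by simp
  moreover have "length cs - m * E < length selections" using True unfolding horizon_def by arith
  ultimately show ?thesis
    unfolding predicted_nth[OF assms] record_accepts_def using True by (auto simp: sel_def Let_def)
next
  case False
  then show ?thesis unfolding predicted_nth[OF assms] record_accepts_def
    by (auto simp: horizon_def min_def)
qed

lemma all_acc_C'_iff:
  assumes "set x \<subseteq> Sigma C" "x \<noteq> []"
  shows "all_acc C' (conf C' x cs) \<longleftrightarrow> m * E \<le> length cs \<and> length cs < horizon \<and>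
    selection_accepts x cs (selections ! (length cs - m * E))"
proof -
  have "conf C' x cs ! i \<in> Acc' \<longleftrightarrow> record_accepts (predicted x cs ! i)" if i: "i < length x" for i
  proof -
    have "conf C' x cs ! i \<in> Q'"
      using conf_in_Q[OF is_paca_C', of x cs] assms(1) i by (auto simp: Q'_def subset_iff)
    moreover have "decode (conf C' x cs ! i) = predicted x cs ! i"
      using decode_conf_C'[OF assms(1), of cs] i by (metis length_conf nth_map)
    ultimately show ?thesis unfolding Acc'_def by simp
  qed
  then show ?thesis
    using assms(2) unfolding all_acc_iff_nth selection_accepts_def
    by (auto simp: record_accepts_predicted Let_def all_acc_iff_nth)
qed

lemma selection_accepts_take:
  assumes "m * E \<le> a" shows "selection_accepts x (take a cs) sel \<longleftrightarrow> selection_accepts x cs sel"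
proof -
  have "take (sel ! j) (drop (j * E) (take a cs)) = take (sel ! j) (drop (j * E) cs)"
    if "j < m" "sel ! j < E" for j
    using block_index_less[OF that] assms by (simp add: drop_take min_def)
  then show ?thesis unfolding selection_accepts_def by auto
qed

lemma ex_selection_accepts_iff:
  "(\<exists>sel\<in>set selections. selection_accepts x cs sel) \<longleftrightarrow>
     thr \<le> count_blocks (accepts_before C x E) E m cs"
proof
  assume "\<exists>sel\<in>set selections. selection_accepts x cs sel"
  then obtain sel where sel: "selection_accepts x cs sel" by blast
  have "{j. j < m \<and> sel ! j < E} \<subseteq> {j. j < m \<and> accepts_before C x E (block E cs j)}"
    using sel unfolding selection_accepts_def accepts_before_def block_def
    by (auto simp: min_def)
  then have "card {j. j < m \<and> sel ! j < E} \<le> count_blocks (accepts_before C x E) E m cs"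
    unfolding count_blocks_def by (intro card_mono) auto
  then show "thr \<le> count_blocks (accepts_before C x E) E m cs"
    using sel unfolding selection_accepts_def by simp
next
  assume thr: "thr \<le> count_blocks (accepts_before C x E) E m cs"
  let ?good = "\<lambda>j. accepts_before C x E (block E cs j)"
  define r where "r j = (SOME r. r < E \<and> all_acc C (conf C x (take r (block E cs j))))" for j
  define sel where "sel = map (\<lambda>j. if ?good j then r j else E) [0..<m]"
  have r: "r j < E \<and> all_acc C (conf C x (take (r j) (block E cs j)))" if "?good j" for j
    using that unfolding accepts_before_def r_def by (rule someI_ex)
  then have "sel \<in> set selections"
    unfolding selections_def set_n_lists sel_def by (auto simp: less_Suc_eq_le less_imp_le)
  have sel_less: "sel ! j < E \<longleftrightarrow> ?good j" if "j < m" for j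
    using that r[of j] by (auto simp: sel_def)
  then have "card {j. j < m \<and> sel ! j < E} = count_blocks (accepts_before C x E) E m cs"
    unfolding count_blocks_def by (metis (no_types, lifting))
  moreover have "all_acc C (conf C x (take (sel ! j) (drop (j * E) cs)))" if "j < m" "sel ! j < E" for j
    using that r[of j] sel_less[of j] by (auto simp: sel_def block_def min_def)
  ultimately have "selection_accepts x cs sel"
    using thr unfolding selection_accepts_def by simp
  with \<open>sel \<in> set selections\<close> show "\<exists>sel\<in>set selections. selection_accepts x cs sel" ..
qed

lemma prob_accept_C':
  assumes x: "set x \<subseteq> Sigma C" "x \<noteq> []"
  shows "prob_accept C' x = prob_coins (length x) (m * E) (\<lambda>cs. thr \<le> count_blocks (accepts_before C x E) E m cs)"
proof -
  let ?n = "length x"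
  have "prob_accept C' x = prob_within C' x horizon"
  proof (rule prob_accept_eq_prob_within)
    fix cs assume acc: "all_acc C' (conf C' x cs)"
    then have "length cs < horizon" using all_acc_C'_iff[OF x] by blast
    then show "accepts_before C' x (Suc horizon) cs"
      unfolding accepts_before_def using acc by (intro exI[of _ "length cs"]) simp
  qed
  have "accepts_before C' x (Suc horizon) cs \<longleftrightarrow> thr \<le> count_blocks (accepts_before C x E) E m (take (m * E) cs)"
    if "cs \<in> coin_seqs ?n horizon" for cs
  proof -
    have len: "length (take k cs) = k" if "k \<le> horizon" for k
      using that \<open>cs \<in> coin_seqs ?n horizon\<close> by (simp add: coin_seqs_def)
    have "accepts_before C' x (Suc horizon) cs \<longleftrightarrow>
        (\<exists>k. m * E \<le> k \<and> k < horizon \<and> selection_accepts x cs (selections ! (k - m * E)))"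
      unfolding accepts_before_def all_acc_C'_iff[OF x]
      by (metis (no_types, lifting) len less_Suc_eq_le less_imp_le_nat selection_accepts_take)
    also have "\<dots> \<longleftrightarrow> (\<exists>k<length selections. selection_accepts x cs (selections ! k))"
      unfolding horizon_def by (metis add_diff_cancel_left' le_add1 le_add_diff_inverse nat_add_left_cancel_less)
    also have "\<dots> \<longleftrightarrow> thr \<le> count_blocks (accepts_before C x E) E m (take (m * E) cs)"
      unfolding ex_selection_accepts_iff[symmetric] selection_accepts_take[OF le_refl]
      by (metis in_set_conv_nth)
    finally show ?thesis .
  qed
  then have "prob_within C' x horizon = prob_coins ?n (m * E + length selections)
      (\<lambda>cs. thr \<le> count_blocks (accepts_before C x E) E m (take (m * E) cs))"
    unfolding prob_within_eq horizon_def by (rule prob_coins_cong)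
  then show ?thesis
    using prob_coins_take[of ?n "m * E" "length selections"]
    unfolding \<open>prob_accept C' x = prob_within C' x horizon\<close> by simp
qed

lemma horizon_pos: "0 < horizon"
proof -
  have "replicate m 0 \<in> set selections" unfolding selections_def set_n_lists by auto
  then show ?thesis unfolding horizon_def by (metis add_gr_0 length_pos_if_in_set)
qed

lemma has_time_C':
  assumes "has_time C T" "0 < thr"
  shows "has_time C' (\<lambda>n. if T n = 0 then 0 else horizon)"
  unfolding has_time_def Sigma_C'
proof (intro allI impI)
  fix x cs assume x: "set x \<subseteq> Sigma C" and cs: "cs \<in> coin_seqs (length x) (length cs)"
    and acc: "all_acc C' (conf C' x cs)"
    and first: "\<forall>k<length cs. \<not> all_acc C' (conf C' x (take k cs))"
  show "length cs < (if T (length x) = 0 then 0 else horizon)"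
  proof (cases "x = []")
    case True
    then have "cs = []" using first by (auto simp: all_acc_def)
    then show ?thesis using True has_time_Nil_pos[OF assms(1)] horizon_pos by simp
  next
    case False
    define sel where "sel = selections ! (length cs - m * E)"
    have "length cs < horizon" "selection_accepts x cs sel"
      using acc unfolding all_acc_C'_iff[OF x False] sel_def by blast+
    moreover from this have "{j. j < m \<and> sel ! j < E} \<noteq> {}"
      using assms(2) unfolding selection_accepts_def by (metis card.empty not_le)
    ultimately obtain j where "j < m" "sel ! j < E"
      and "all_acc C (conf C x (take (sel ! j) (drop (j * E) cs)))"
      unfolding selection_accepts_def by blast
    moreover have "take (sel ! j) (drop (j * E) cs) \<in> coin_seqs (length x) (length (take (sel ! j) (drop (j * E) cs)))"
      using cs by (auto simp: coin_seqs_def dest: in_set_takeD in_set_dropD)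
    ultimately have "accepts_before C x (T (length x)) (take (sel ! j) (drop (j * E) cs))"
      using has_time_accepts_before[OF assms(1) x] by blast
    then show ?thesis using \<open>length cs < horizon\<close> by (auto simp: accepts_before_def)
  qed
qed

lemma two_sided_C':
  assumes m: "m = 2 * h + 1" and thr: "thr = Suc h"
    and C: "two_sided C p L" "has_time C T" "\<And>n. T n \<le> E" "0 < E"
    and p: "p \<le> 1/2" "2 ^ (2 * h + 1) * (p * (1 - p)) ^ h \<le> p'" "0 < p'" "p' < 1/2"
  shows "two_sided C' p' L"
proof -
  have L: "L \<subseteq> lists (Sigma C)"
    and prob_C: "\<And>x. x \<in> lists (Sigma C) \<Longrightarrow> (x \<in> L \<longleftrightarrow> 1 - p \<le> prob_accept C x) \<and> (x \<notin> L \<longleftrightarrow> prob_accept C x \<le> p)"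
    using C(1) unfolding two_sided_def by auto
  have block: "prob_accept C x = prob_coins (length x) E (accepts_before C x E)"
    if "x \<in> lists (Sigma C)" for x
    using that C(2-4) by (intro prob_accept_eq_block) auto
  have majority: "prob_accept C' x = prob_coins (length x) ((2*h+1) * E)
      (\<lambda>cs. h < count_blocks (accepts_before C x E) E (2*h+1) cs)"
    if "x \<in> lists (Sigma C)" "x \<noteq> []" for x
    using that prob_accept_C'[of x] unfolding m thr by (auto simp: Suc_le_eq)
  show ?thesis
  proof (rule two_sidedI, unfold Sigma_C')
    show "L \<subseteq> lists (Sigma C)" by (rule L)
  next
    fix x assume "x \<in> L"
    then have x: "x \<in> lists (Sigma C)" using L by blast
    with \<open>x \<in> L\<close> have "1 - p \<le> prob_accept C x" using prob_C by blast
    show "1 - p' \<le> prob_accept C' x"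
    proof (cases "x = []")
      case False
      have "prob_coins (length x) E (\<lambda>b. \<not> accepts_before C x E b) \<le> p"
        using \<open>1 - p \<le> prob_accept C x\<close> by (simp add: prob_coins_not block[OF x])
      from prob_majority_blocks_le[OF this p(1), where h = h]
      have "prob_coins (length x) ((2*h+1) * E)
          (\<lambda>cs. h < count_blocks (\<lambda>b. \<not> accepts_before C x E b) E (2*h+1) cs) \<le> p'"
        using p(2) by linarith
      then show ?thesis
        using majority[OF x False] prob_majority_blocks_not[of "length x" h E "accepts_before C x E"]
        by linarith
    qed (use p(3) in \<open>simp add: prob_accept_Nil\<close>)
  next
    fix x assume x: "x \<in> lists (Sigma C)" "x \<notin> L"
    then have "prob_accept C x \<le> p" using prob_C by auto
    then have "x \<noteq> []" using p prob_accept_Nil by auto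
    show "prob_accept C' x \<le> p'"
      using prob_majority_blocks_le[OF _ p(1)] p(2) \<open>prob_accept C x \<le> p\<close>
      unfolding majority[OF x(1) \<open>x \<noteq> []\<close>] block[OF x(1)] by (meson order_trans)
  qed (use p in simp)
qed

end

theorem mainTheorem7:
  fixes p p' :: real and C :: paca and L :: "nat list set" and T :: "nat \<Rightarrow> nat"
  assumes "0 < p'" and "p' < p" and "p < 1/2"
    and "is_paca C" and "two_sided C p L"
    and "has_time C T" and "(\<lambda>n. real (T n)) \<in> O(\<lambda>n. 1)"
  shows "\<exists>C' T'. is_paca C' \<and> Sigma C' = Sigma C \<and> two_sided C' p' L \<and>
           has_time C' T' \<and> (\<lambda>n. real (T' n)) \<in> O(\<lambda>n. real (T n))"
proof -
  obtain D where D: "\<And>n. T n \<le> D" using bounded_of_bigo_one[OF assms(7)] by blast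
  obtain h where h: "2 ^ (2 * h + 1) * (p * (1 - p)) ^ h \<le> p'"
    using majority_error_vanishes[of p p'] assms(1-3) by auto
  interpret amplifier C "Suc D" "2 * h + 1" "Suc h" using assms(4) by unfold_locales
  have "two_sided C' p' L"
    using assms(1-3,5,6) D h by (intro two_sided_C'[of h p L T]) (auto intro: le_SucI)
  moreover have "has_time C' (\<lambda>n. if T n = 0 then 0 else horizon)"
    using assms(6) by (rule has_time_C') simp
  ultimately show ?thesis
    using is_paca_C' Sigma_C' bigo_of_nonzero_const[of T horizon] by blast
qed

end
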